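(* There is an absolute constant $c>0$ such that the following holds. Let $p$ be a prime and let $f_1, f_2:\mathbb F_p \to\mathbb C$. Define $F:\mathbb F_p\to\mathbb C$ by $$F(x) =\frac 1p \sum_{y\in\mathbb F_p} f_1 (x+y)\, f_2 (x+y^2).$$ Then $$\big\Vert F-\mathbb E[f_1]\cdot \mathbb E[f_2]\big\Vert_2 \leq c\,p^{-\frac 1{10}} \Vert f_1\Vert_2 \cdot \Vert f_2\Vert_2 .$$
   Context: For $f:\mathbb F_p\to\mathbb C$, $\mathbb E[f]=\frac1p\sum_{x\in\mathbb F_p} f(x)$ and $\Vert f\Vert_2=\big(\frac1p\sum_{x\in\mathbb F_p}|f(x)|^2\big)^{1/2}$ (normalized counting measure). In $F-\mathbb E[f_1]\cdot\mathbb E[f_2]$, the product $\mathbb E[f_1]\mathbb E[f_2]$ denotes the constant function. *)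

theory Defs
  imports "HOL-Analysis.Analysis" "HOL-Computational_Algebra.Primes"
begin

text \<open>F_p is modelled as the residues {0..<p} with arithmetic mod p.
Functions F_p -> C are functions nat => complex; only their values on {0..<p} matter.\<close>

definition expect :: "nat \<Rightarrow> (nat \<Rightarrow> complex) \<Rightarrow> complex" where
  "expect p f = (\<Sum>x<p. f x) / of_nat p"

definition norm2 :: "nat \<Rightarrow> (nat \<Rightarrow> complex) \<Rightarrow> real" where
  "norm2 p f = sqrt ((\<Sum>x<p. (cmod (f x))\<^sup>2) / real p)"

definition corrF :: "nat \<Rightarrow> (nat \<Rightarrow> complex) \<Rightarrow> (nat \<Rightarrow> complex) \<Rightarrow> nat \<Rightarrow> complex" where
  "corrF p f1 f2 x = (\<Sum>y<p. f1 ((x + y) mod p) * f2 ((x + y^2) mod p)) / of_nat p"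

end

theory Submission
  imports Defs "HOL-Library.Real_Mod"
begin

text \<open>
  Subtracting its mean from \<open>f2\<close> turns
  \<open>F - E[f1] E[f2]\<close> into the correlation of \<open>f1\<close> with a mean-zero function, so assume
  \<open>E[f2] = 0\<close>. Two applications of Cauchy--Schwarz give
  \<open>\<parallel>F\<parallel>^4 \<le> \<parallel>f1\<parallel>^4 E_{x,h} |\<Psi>(x,h)|^2\<close>, where
  \<open>\<Psi>(x,h) = E_y f2(x + y^2) conj(f2(x + h + (y - h)^2))\<close>.

  Expanding \<open>f2\<close> in its Fourier series, the Fourier coefficients of \<open>\<Psi>(\<cdot>,h)\<close> are combinations
  of the products \<open>f2^(\<xi> + \<eta>) conj(f2^(\<eta>))\<close>, weighted by quadratic exponential sums in \<open>y\<close>.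
  By Gauss sums the Gram matrix of these weights, as functions of \<open>h\<close>, has off-diagonal entries
  of size \<open>p^(-1/2)\<close> when \<open>\<xi> \<noteq> 0\<close>; the one large entry \<open>\<xi> = \<eta> = 0\<close> is killed by \<open>f2^(0) = 0\<close>.
  Hence \<open>E|\<Psi>|^2 \<le> 3 p^(-1/2) \<parallel>f2\<parallel>^4\<close> and \<open>\<parallel>F\<parallel> \<le> 3^(1/4) p^(-1/8) \<parallel>f1\<parallel> \<parallel>f2\<parallel>\<close>.
  For \<open>p = 2\<close> one has \<open>y^2 = y\<close>, and Cauchy--Schwarz alone suffices.
\<close>

definition ep :: "nat \<Rightarrow> int \<Rightarrow> complex" where
  "ep p k = cis (2 * pi * of_int k / of_nat p)"

definition p_periodic :: "nat \<Rightarrow> (int \<Rightarrow> 'a) \<Rightarrow> bool" where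
  "p_periodic p g \<longleftrightarrow> (\<forall>x. g x = g (x mod int p))"

lemma ep_add: "ep p (a + b) = ep p a * ep p b"
  unfolding ep_def by (simp add: cis_mult add_divide_distrib distrib_left)

lemma norm_ep [simp]: "norm (ep p a) = 1"
  unfolding ep_def by simp

lemma cnj_ep: "cnj (ep p a) = ep p (- a)"
  unfolding ep_def by (simp add: cis_cnj)

lemma ep_0 [simp]: "ep p 0 = 1"
  unfolding ep_def by simp

lemma ep_eq_1_iff:
  assumes "p > 0"
  shows "ep p k = 1 \<longleftrightarrow> int p dvd k"
proof
  assume "ep p k = 1"
  then obtain n where "2 * pi * of_int k / of_nat p = of_int n * (2 * pi)"
    unfolding ep_def cis_eq_1_iff by blast
  then have "of_int k = (of_int (n * int p) :: real)"
    using assms pi_gt_zero by (simp add: field_simps)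
  then have "k = n * int p" by linarith
  then show "int p dvd k" by simp
next
  assume "int p dvd k"
  then obtain n where "k = int p * n" ..
  then have "2 * pi * of_int k / of_nat p = 2 * pi * of_int n"
    using assms by (simp add: field_simps)
  then show "ep p k = 1" unfolding ep_def by simp
qed

lemma ep_cong:
  assumes "p > 0" "a mod int p = b mod int p"
  shows "ep p a = ep p b"
proof -
  have "ep p (a - b) = 1"
    using assms by (simp add: ep_eq_1_iff mod_eq_dvd_iff)
  have "ep p a = ep p (b + (a - b))" by simp
  also have "\<dots> = ep p b" unfolding ep_add \<open>ep p (a - b) = 1\<close> by simp
  finally show ?thesis .
qed

lemma p_periodic_cong: "p_periodic p g \<Longrightarrow> a mod int p = b mod int p \<Longrightarrow> g a = g b"
  unfolding p_periodic_def by metis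

lemma p_periodic_compose:
  assumes "p_periodic p g" "\<And>x. q x mod int p = q (x mod int p) mod int p"
  shows "p_periodic p (\<lambda>x. g (q x))"
  unfolding p_periodic_def using assms p_periodic_cong by metis

lemma p_periodic_const: "p_periodic p (\<lambda>x. c)"
  unfolding p_periodic_def by simp

lemma p_periodic_mult: "p_periodic p a \<Longrightarrow> p_periodic p b \<Longrightarrow> p_periodic p (\<lambda>x. a x * b x)"
  unfolding p_periodic_def by metis

lemma p_periodic_cnj: "p_periodic p a \<Longrightarrow> p_periodic p (\<lambda>x. cnj (a x))"
  unfolding p_periodic_def by metis

lemma p_periodic_divide: "p_periodic p a \<Longrightarrow> p_periodic p (\<lambda>x. a x / c)"
  unfolding p_periodic_def by metis

lemma p_periodic_sum: "(\<And>y. p_periodic p (\<lambda>x. G x y)) \<Longrightarrow> p_periodic p (\<lambda>x. \<Sum>y\<in>A. G x y)"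
  unfolding p_periodic_def by (intro allI sum.cong refl) blast

lemma p_periodic_norm_sq: "p_periodic p a \<Longrightarrow> p_periodic p (\<lambda>x. (cmod (a x))\<^sup>2)"
  unfolding p_periodic_def by metis

lemma mod_power_cong: "a mod (m::int) = b mod m \<Longrightarrow> a ^ n mod m = b ^ n mod m"
  by (metis power_mod)

lemma mod_mod_self: "(x::int) mod m = (x mod m) mod m"
  by simp

lemmas mod_polynomial_cong = mod_add_cong mod_diff_cong mod_mult_cong mod_power_cong mod_mod_self refl

lemma p_periodic_ep_linear:
  assumes "p > 0"
  shows "p_periodic p (\<lambda>x. ep p (k * x))"
  unfolding p_periodic_def by (metis assms ep_cong mod_mult_right_eq)

lemma sum_periodic_reindex:
  assumes "p_periodic p g" "bij_betw (\<lambda>x. q x mod int p) {0..<int p} {0..<int p}"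
  shows "(\<Sum>x\<in>{0..<int p}. g (q x)) = (\<Sum>x\<in>{0..<int p}. g x)"
proof -
  have "(\<Sum>x\<in>{0..<int p}. g (q x)) = (\<Sum>x\<in>{0..<int p}. g (q x mod int p))"
    using assms(1) unfolding p_periodic_def by metis
  also have "\<dots> = (\<Sum>x\<in>{0..<int p}. g x)"
    by (rule sum.reindex_bij_betw[OF assms(2)])
  finally show ?thesis .
qed

lemma sum_periodic_shift:
  assumes "p > 0" "p_periodic p g"
  shows "(\<Sum>x\<in>{0..<int p}. g (x + a)) = (\<Sum>x\<in>{0..<int p}. g x)"
proof (rule sum_periodic_reindex[OF assms(2)])
  show "bij_betw (\<lambda>x. (x + a) mod int p) {0..<int p} {0..<int p}"
    by (rule bij_betwI[where g = "\<lambda>y. (y - a) mod int p"]) (use assms(1) in \<open>auto simp: mod_simps\<close>)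
qed

lemma sum_periodic_reflect:
  assumes "p > 0" "p_periodic p g"
  shows "(\<Sum>x\<in>{0..<int p}. g (a - x)) = (\<Sum>x\<in>{0..<int p}. g x)"
proof (rule sum_periodic_reindex[OF assms(2)])
  show "bij_betw (\<lambda>x. (a - x) mod int p) {0..<int p} {0..<int p}"
    by (rule bij_betwI[where g = "\<lambda>y. (a - y) mod int p"]) (use assms(1) in \<open>auto simp: mod_simps\<close>)
qed

lemma sum_ep_linear:
  assumes "p > 0"
  shows "(\<Sum>x\<in>{0..<int p}. ep p (k * x)) = (if int p dvd k then of_nat p else 0)"
proof (cases "int p dvd k")
  case True
  then have "ep p (k * x) = 1" for x
    using assms by (simp add: ep_eq_1_iff)
  then show ?thesis using True by simp
next
  case False
  define S where "S = (\<Sum>x\<in>{0..<int p}. ep p (k * x))"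
  have "S * ep p k = (\<Sum>x\<in>{0..<int p}. ep p (k * (x + 1)))"
    unfolding S_def sum_distrib_right by (simp add: ep_add[symmetric] algebra_simps)
  also have "\<dots> = S" unfolding S_def
    by (rule sum_periodic_shift[OF assms p_periodic_ep_linear[OF assms]])
  finally have "S * (ep p k - 1) = 0" by (simp add: algebra_simps)
  moreover have "ep p k \<noteq> 1" using ep_eq_1_iff[OF assms] False by blast
  ultimately show ?thesis using False S_def by simp
qed

lemma dvd_diff_iff_eq:
  assumes "a \<in> {0..<int p}" "b \<in> {0..<int p}"
  shows "int p dvd (a - b) \<longleftrightarrow> a = b"
proof
  assume "int p dvd (a - b)"
  then have "a mod int p = b mod int p" by (simp add: mod_eq_dvd_iff)
  then show "a = b" using assms by simp
qed simp

lemma sum_dvd_delta: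
  assumes "c \<in> {0..<int p}"
  shows "(\<Sum>v\<in>{0..<int p}. (if int p dvd (c - v) then g v else 0)) = g c"
proof -
  have "(\<Sum>v\<in>{0..<int p}. (if int p dvd (c - v) then g v else 0))
      = (\<Sum>v\<in>{0..<int p}. (if v = c then g v else 0))"
    by (rule sum.cong) (use dvd_diff_iff_eq[OF assms] in auto)
  also have "\<dots> = g c" using assms by (simp add: sum.delta')
  finally show ?thesis .
qed

definition fourier :: "nat \<Rightarrow> (int \<Rightarrow> complex) \<Rightarrow> int \<Rightarrow> complex" where
  "fourier p f \<eta> = (\<Sum>w\<in>{0..<int p}. f w * ep p (-(\<eta> * w))) / of_nat p"

lemma p_periodic_fourier: assumes "p > 0" shows "p_periodic p (fourier p f)"
  unfolding p_periodic_def fourier_def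
proof
  fix \<eta>
  have "\<And>w. ep p (-(\<eta> * w)) = ep p (-((\<eta> mod int p) * w))"
    by (rule ep_cong[OF assms]) (metis mod_minus_eq mod_mult_left_eq)
  then show "(\<Sum>w = 0..<int p. f w * ep p (- (\<eta> * w))) / of_nat p =
        (\<Sum>w = 0..<int p. f w * ep p (- (\<eta> mod int p * w))) / of_nat p" by simp
qed

lemma fourier_inversion:
  assumes "p > 0" "p_periodic p f"
  shows "f w = (\<Sum>\<eta>\<in>{0..<int p}. fourier p f \<eta> * ep p (\<eta> * w))"
proof -
  have "(\<Sum>\<eta>\<in>{0..<int p}. fourier p f \<eta> * ep p (\<eta> * w))
      = (\<Sum>\<eta>\<in>{0..<int p}. \<Sum>v\<in>{0..<int p}. f v * ep p ((w - v) * \<eta>) / of_nat p)"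
    unfolding fourier_def sum_divide_distrib sum_distrib_right
    by (intro sum.cong refl) (simp add: ep_add[symmetric] algebra_simps)
  also have "\<dots> = (\<Sum>v\<in>{0..<int p}. f v * (\<Sum>\<eta>\<in>{0..<int p}. ep p ((w - v) * \<eta>)) / of_nat p)"
    by (subst sum.swap) (simp add: sum_distrib_left sum_divide_distrib)
  also have "\<dots> = (\<Sum>v\<in>{0..<int p}. (if int p dvd (w mod int p - v) then f v else 0))"
  proof (intro sum.cong refl)
    fix v
    have "int p dvd (w - v) \<longleftrightarrow> int p dvd (w mod int p - v)"
      by (metis mod_diff_left_eq mod_eq_0_iff_dvd)
    then show "f v * (\<Sum>\<eta>\<in>{0..<int p}. ep p ((w - v) * \<eta>)) / of_nat p
      = (if int p dvd (w mod int p - v) then f v else 0)"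
      using assms(1) by (simp add: sum_ep_linear)
  qed
  also have "\<dots> = f (w mod int p)"
    by (rule sum_dvd_delta) (use assms(1) in auto)
  also have "\<dots> = f w" using assms(2) unfolding p_periodic_def by metis
  finally show ?thesis by simp
qed

lemma of_real_sum_norm_sq: "complex_of_real (\<Sum>x\<in>A. (cmod (g x))\<^sup>2) = (\<Sum>x\<in>A. g x * cnj (g x))"
  unfolding of_real_sum by (simp only: complex_norm_square)

lemma parseval_trig_poly:
  assumes "p > 0"
  shows "(\<Sum>x\<in>{0..<int p}. (cmod (\<Sum>\<xi>\<in>{0..<int p}. C \<xi> * ep p (\<xi> * x)))\<^sup>2)
     = real p * (\<Sum>\<xi>\<in>{0..<int p}. (cmod (C \<xi>))\<^sup>2)"
proof -
  have "complex_of_real (\<Sum>x\<in>{0..<int p}. (cmod (\<Sum>\<xi>\<in>{0..<int p}. C \<xi> * ep p (\<xi> * x)))\<^sup>2)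
      = (\<Sum>x\<in>{0..<int p}. \<Sum>\<zeta>\<in>{0..<int p}. \<Sum>\<xi>\<in>{0..<int p}. C \<xi> * cnj (C \<zeta>) * ep p ((\<xi> - \<zeta>) * x))"
    unfolding of_real_sum_norm_sq
    by (simp add: sum_distrib_left sum_distrib_right cnj_ep ep_add[symmetric] algebra_simps)
  also have "\<dots> = (\<Sum>\<zeta>\<in>{0..<int p}. \<Sum>\<xi>\<in>{0..<int p}. \<Sum>x\<in>{0..<int p}. C \<xi> * cnj (C \<zeta>) * ep p ((\<xi> - \<zeta>) * x))"
    by (subst sum.swap) (rule sum.cong[OF refl], rule sum.swap)
  also have "\<dots> = (\<Sum>\<zeta>\<in>{0..<int p}. \<Sum>\<xi>\<in>{0..<int p}. C \<xi> * cnj (C \<zeta>) * (\<Sum>x\<in>{0..<int p}. ep p ((\<xi> - \<zeta>) * x)))"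
    by (simp add: sum_distrib_left)
  also have "\<dots> = (\<Sum>\<zeta>\<in>{0..<int p}. \<Sum>\<xi>\<in>{0..<int p}.
        (if int p dvd (\<zeta> - \<xi>) then C \<xi> * cnj (C \<xi>) * of_nat p else 0))"
    using assms by (intro sum.cong refl) (auto simp: sum_ep_linear dvd_diff_iff_eq)
  also have "\<dots> = (\<Sum>\<xi>\<in>{0..<int p}. C \<xi> * cnj (C \<xi>) * of_nat p)"
    by (intro sum.cong refl sum_dvd_delta) auto
  also have "\<dots> = complex_of_real (real p * (\<Sum>\<xi>\<in>{0..<int p}. (cmod (C \<xi>))\<^sup>2))"
    unfolding of_real_mult of_real_sum_norm_sq by (simp add: sum_distrib_left mult.commute)
  finally show ?thesis using of_real_eq_iff by blast
qed

lemma parseval: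
  assumes "p > 0" "p_periodic p f"
  shows "(\<Sum>\<eta>\<in>{0..<int p}. (cmod (fourier p f \<eta>))\<^sup>2) = (\<Sum>w\<in>{0..<int p}. (cmod (f w))\<^sup>2) / real p"
proof -
  have "(\<Sum>w\<in>{0..<int p}. (cmod (f w))\<^sup>2)
      = (\<Sum>w\<in>{0..<int p}. (cmod (\<Sum>\<eta>\<in>{0..<int p}. fourier p f \<eta> * ep p (\<eta> * w)))\<^sup>2)"
    using fourier_inversion[OF assms] by simp
  also have "\<dots> = real p * (\<Sum>\<eta>\<in>{0..<int p}. (cmod (fourier p f \<eta>))\<^sup>2)"
    by (rule parseval_trig_poly[OF assms(1)])
  finally show ?thesis using assms(1) by simp
qed

lemma fourier_0: "fourier p f 0 = (\<Sum>w\<in>{0..<int p}. f w) / of_nat p"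
  unfolding fourier_def by simp

lemma p_periodic_ep_quadratic:
  assumes "p > 0"
  shows "p_periodic p (\<lambda>h. ep p (a * h\<^sup>2 + b * h + c))"
  unfolding p_periodic_def
proof
  fix h
  have "(a * h\<^sup>2 + b * h + c) mod int p = (a * (h mod int p)\<^sup>2 + b * (h mod int p) + c) mod int p"
  proof -
    have "(a * h\<^sup>2) mod int p = (a * (h mod int p)\<^sup>2) mod int p"
      by (metis mod_mult_right_eq power_mod)
    moreover have "(b * h) mod int p = (b * (h mod int p)) mod int p"
      by (metis mod_mult_right_eq)
    ultimately show ?thesis by (metis mod_add_cong)
  qed
  then show "ep p (a * h\<^sup>2 + b * h + c) = ep p (a * (h mod int p)\<^sup>2 + b * (h mod int p) + c)"
    by (rule ep_cong[OF assms])
qed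

lemma prime_dvd_double_mult:
  assumes "prime p" "odd p" "int p dvd (2 * a * t)" "\<not> int p dvd a"
  shows "int p dvd t"
proof -
  have pi: "prime (int p)" using assms(1) by simp
  have "\<not> int p dvd 2"
  proof
    assume "int p dvd 2"
    then have "p dvd 2" by presburger
    then have "p \<le> 2" by (simp add: dvd_imp_le)
    moreover have "p \<ge> 2" using assms(1) prime_ge_2_nat by blast
    ultimately show False using assms(2) by auto
  qed
  then show ?thesis using assms(3,4) pi by (metis prime_dvd_mult_iff)
qed

lemma sum_ep_double_mult:
  assumes "prime p" "odd p" "\<not> int p dvd a" "t \<in> {0..<int p}"
  shows "(\<Sum>z\<in>{0..<int p}. ep p (2 * a * t * z)) = (if t = 0 then of_nat p else 0)"
proof -
  have p0: "p > 0" using assms(1) prime_gt_0_nat by blast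
  have "int p dvd (2 * a * t) \<longleftrightarrow> t = 0"
  proof
    assume "int p dvd (2 * a * t)"
    then have "int p dvd t" using prime_dvd_double_mult assms(1-3) by blast
    then show "t = 0" using assms(4) dvd_diff_iff_eq[of t p 0] p0 by auto
  qed simp
  then show ?thesis using p0 by (simp add: sum_ep_linear)
qed

lemma quadratic_gauss_sum_mult_cnj:
  assumes "prime p" "odd p" "\<not> int p dvd a"
  shows "(\<Sum>h\<in>{0..<int p}. ep p (a * h\<^sup>2 + b * h)) * cnj (\<Sum>h\<in>{0..<int p}. ep p (a * h\<^sup>2 + b * h))
           = of_nat p"
proof -
  have p0: "p > 0" using assms(1) prime_gt_0_nat by blast
  have "(\<Sum>h\<in>{0..<int p}. ep p (a * h\<^sup>2 + b * h)) * cnj (\<Sum>h\<in>{0..<int p}. ep p (a * h\<^sup>2 + b * h))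
      = (\<Sum>h\<in>{0..<int p}. \<Sum>z\<in>{0..<int p}. ep p (a * h\<^sup>2 + b * h) * ep p (- (a * z\<^sup>2 + b * z)))"
    by (simp only: sum_product cnj_sum cnj_ep)
  also have "\<dots> = (\<Sum>z\<in>{0..<int p}. \<Sum>h\<in>{0..<int p}. ep p (a * h\<^sup>2 + b * h + (- (a * z\<^sup>2 + b * z))))"
    by (subst sum.swap) (simp only: ep_add)
  also have "\<dots> = (\<Sum>z\<in>{0..<int p}. \<Sum>t\<in>{0..<int p}.
                      ep p (a * (t + z)\<^sup>2 + b * (t + z) + (- (a * z\<^sup>2 + b * z))))"
    by (rule sum.cong[OF refl], rule sum_periodic_shift[OF p0 p_periodic_ep_quadratic[OF p0], symmetric])
  also have "\<dots> = (\<Sum>t\<in>{0..<int p}. ep p (a * t\<^sup>2 + b * t) * (\<Sum>z\<in>{0..<int p}. ep p (2 * a * t * z)))"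
  proof -
    have "a * (t + z)\<^sup>2 + b * (t + z) + (- (a * z\<^sup>2 + b * z)) = (a * t\<^sup>2 + b * t) + 2 * a * t * z" for t z
      by (simp add: power2_eq_square algebra_simps)
    then show ?thesis by (subst sum.swap) (simp only: ep_add sum_distrib_left)
  qed
  also have "\<dots> = (\<Sum>t\<in>{0..<int p}. if t = 0 then of_nat p else 0)"
    by (intro sum.cong refl) (simp add: sum_ep_double_mult[OF assms])
  also have "\<dots> = of_nat p"
    using p0 by simp
  finally show ?thesis .
qed

lemma norm_quadratic_gauss_sum:
  assumes "prime p" "odd p" "\<not> int p dvd a"
  shows "cmod (\<Sum>h\<in>{0..<int p}. ep p (a * h\<^sup>2 + b * h)) = sqrt (real p)"
proof -
  define S where "S = (\<Sum>h\<in>{0..<int p}. ep p (a * h\<^sup>2 + b * h))"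
  have "complex_of_real ((cmod S)\<^sup>2) = complex_of_real (real p)"
    using quadratic_gauss_sum_mult_cnj[OF assms, of b] complex_norm_square[of S] unfolding S_def by simp
  then have "(cmod S)\<^sup>2 = real p"
    using of_real_eq_iff by blast
  then show ?thesis using real_sqrt_unique[of "cmod S" "real p"] unfolding S_def by simp
qed

lemma norm_quadratic_sum_le:
  assumes "prime p" "odd p" "\<not> int p dvd b"
  shows "cmod (\<Sum>h\<in>{0..<int p}. ep p (a * h\<^sup>2 + b * h)) \<le> sqrt (real p)"
proof (cases "int p dvd a")
  case True
  have p0: "p > 0" using assms(1) prime_gt_0_nat by blast
  have "\<And>h. ep p (a * h\<^sup>2 + b * h) = ep p (b * h)"
  proof -
    fix h
    from True obtain m where "a = int p * m" by (auto elim: dvdE)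
    then have "(a * h\<^sup>2 + b * h) mod int p = (b * h) mod int p"
      by (simp add: mult.assoc)
    then show "ep p (a * h\<^sup>2 + b * h) = ep p (b * h)" by (rule ep_cong[OF p0])
  qed
  then show ?thesis using assms(3) p0 by (simp add: sum_ep_linear)
next
  case False
  then show ?thesis using norm_quadratic_gauss_sum assms by simp
qed

lemma quadratic_sum_complete_square:
  assumes "p > 0" "\<xi> * u = 1 + int p * m"
  shows "(\<Sum>y\<in>{0..<int p}. ep p (\<xi> * y\<^sup>2 + 2 * k * y))
           = ep p (- (k\<^sup>2 * u)) * (\<Sum>y\<in>{0..<int p}. ep p (\<xi> * y\<^sup>2))"
proof -
  note m = assms(2)
  have "(\<Sum>y\<in>{0..<int p}. ep p (\<xi> * y\<^sup>2))
      = (\<Sum>y\<in>{0..<int p}. ep p (\<xi> * (y + k * u)\<^sup>2 + 0 * (y + k * u) + 0))"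
    using sum_periodic_shift[OF assms(1) p_periodic_ep_quadratic[OF assms(1), of \<xi> 0 0], of "k * u"]
    by simp
  also have "\<dots> = (\<Sum>y\<in>{0..<int p}. ep p (k\<^sup>2 * u) * ep p (\<xi> * y\<^sup>2 + 2 * k * y))"
  proof (intro sum.cong refl)
    fix y
    have "\<xi> * (y + k * u)\<^sup>2 = (\<xi> * y\<^sup>2 + 2 * k * y + k\<^sup>2 * u) + int p * (m * (2 * k * y + k\<^sup>2 * u))"
    proof -
      have "\<xi> * (y + k * u)\<^sup>2 = \<xi> * y\<^sup>2 + 2 * k * y * (\<xi> * u) + k\<^sup>2 * u * (\<xi> * u)"
        by (simp add: power2_eq_square algebra_simps)
      then show ?thesis unfolding m by (simp add: algebra_simps)
    qed
    then have E: "\<xi> * (y + k * u)\<^sup>2 + 0 * (y + k * u) + 0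
        = (k\<^sup>2 * u + (\<xi> * y\<^sup>2 + 2 * k * y)) + int p * (m * (2 * k * y + k\<^sup>2 * u))"
      by (simp add: algebra_simps)
    have "(\<xi> * (y + k * u)\<^sup>2 + 0 * (y + k * u) + 0) mod int p
        = (k\<^sup>2 * u + (\<xi> * y\<^sup>2 + 2 * k * y)) mod int p"
      unfolding E by (rule mod_mult_self2)
    then show "ep p (\<xi> * (y + k * u)\<^sup>2 + 0 * (y + k * u) + 0)
        = ep p (k\<^sup>2 * u) * ep p (\<xi> * y\<^sup>2 + 2 * k * y)"
      by (metis ep_add ep_cong[OF assms(1)])
  qed
  finally have S0: "(\<Sum>y\<in>{0..<int p}. ep p (\<xi> * y\<^sup>2))
      = ep p (k\<^sup>2 * u) * (\<Sum>y\<in>{0..<int p}. ep p (\<xi> * y\<^sup>2 + 2 * k * y))"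
    by (simp only: sum_distrib_left)
  have E1: "ep p (- (k\<^sup>2 * u)) * ep p (k\<^sup>2 * u) = 1"
    using ep_add[of p "- (k\<^sup>2 * u)" "k\<^sup>2 * u"] by simp
  show ?thesis unfolding S0 mult.assoc[symmetric] E1 by simp
qed

lemma mod_inverse_exists:
  assumes "prime p" "\<not> int p dvd \<xi>"
  shows "\<exists>u m. \<xi> * u = 1 + int p * m"
proof -
  have "prime (int p)" using assms(1) by simp
  then have "coprime \<xi> (int p)" using assms(2)
    by (metis coprime_commute prime_imp_coprime)
  then have g: "gcd \<xi> (int p) = 1" by simp
  obtain u v where "u * \<xi> + v * int p = gcd \<xi> (int p)" using bezout_int by blast
  then have "\<xi> * u = 1 + int p * (- v)" using g by (simp add: algebra_simps)
  then show ?thesis by blast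
qed

definition psi :: "nat \<Rightarrow> (int \<Rightarrow> complex) \<Rightarrow> int \<Rightarrow> int \<Rightarrow> complex" where
  "psi p f x h = (\<Sum>y\<in>{0..<int p}. f (x + y\<^sup>2) * cnj (f (x + h + (y - h)\<^sup>2))) / of_nat p"

definition fourier_pair :: "nat \<Rightarrow> (int \<Rightarrow> complex) \<Rightarrow> int \<Rightarrow> int \<Rightarrow> complex" where
  "fourier_pair p f \<xi> \<eta> = fourier p f (\<xi> + \<eta>) * cnj (fourier p f \<eta>)"

text \<open>The phase of \<open>psi_kernel\<close> is \<open>(\<xi> + \<eta>)(x + y\<^sup>2) - \<eta>(x + h + (y - h)\<^sup>2) - \<xi>x\<close>, so that
\<open>psi_coeff p f \<xi> h\<close> is the \<open>\<xi>\<close>-th Fourier coefficient of \<open>psi p f \<cdot> h\<close>.\<close>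

definition psi_kernel :: "nat \<Rightarrow> int \<Rightarrow> int \<Rightarrow> int \<Rightarrow> complex" where
  "psi_kernel p \<xi> \<eta> h =
     (\<Sum>y\<in>{0..<int p}. ep p (\<xi> * y\<^sup>2 + 2 * (\<eta> * h) * y + (- (\<eta> * h) - \<eta> * h\<^sup>2))) / of_nat p"

definition psi_coeff :: "nat \<Rightarrow> (int \<Rightarrow> complex) \<Rightarrow> int \<Rightarrow> int \<Rightarrow> complex" where
  "psi_coeff p f \<xi> h = (\<Sum>\<eta>\<in>{0..<int p}. fourier_pair p f \<xi> \<eta> * psi_kernel p \<xi> \<eta> h)"

lemma psi_kernel_mult_ep:
  "psi_kernel p \<xi> \<eta> h * ep p (\<xi> * x)
     = (\<Sum>y\<in>{0..<int p}. ep p ((\<xi> + \<eta>) * (x + y\<^sup>2)) * ep p (- (\<eta> * (x + h + (y - h)\<^sup>2)))) / of_nat p"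
proof -
  have phase: "\<xi> * y\<^sup>2 + 2 * (\<eta> * h) * y + (- (\<eta> * h) - \<eta> * h\<^sup>2) + \<xi> * x
      = (\<xi> + \<eta>) * (x + y\<^sup>2) + - (\<eta> * (x + h + (y - h)\<^sup>2))" for y
    by (simp add: power2_eq_square algebra_simps)
  show ?thesis
    unfolding psi_kernel_def sum_divide_distrib sum_distrib_right
    by (intro sum.cong refl) (simp only: ep_add[symmetric] phase times_divide_eq_left)
qed

lemma psi_fourier_expansion:
  assumes p0: "p > 0" and pf: "p_periodic p f"
  shows "psi p f x h = (\<Sum>\<xi>\<in>{0..<int p}. psi_coeff p f \<xi> h * ep p (\<xi> * x))"
proof -
  define X where "X y = x + y\<^sup>2" for y
  define Y where "Y y = x + h + (y - h)\<^sup>2" for y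
  define T where "T \<eta> \<zeta> y
    = fourier p f \<zeta> * ep p (\<zeta> * X y) * (cnj (fourier p f \<eta>) * ep p (- (\<eta> * Y y))) / of_nat p"
    for \<eta> \<zeta> y
  have T_periodic: "p_periodic p (\<lambda>\<zeta>. \<Sum>y\<in>{0..<int p}. T \<eta> \<zeta> y)" for \<eta>
    unfolding p_periodic_def
  proof
    fix \<zeta>
    have "ep p (\<zeta> * z) = ep p ((\<zeta> mod int p) * z)" for z
      by (rule ep_cong[OF p0]) (simp add: mod_mult_left_eq)
    moreover have "fourier p f \<zeta> = fourier p f (\<zeta> mod int p)"
      using p_periodic_fourier[OF p0] unfolding p_periodic_def by blast
    ultimately show "(\<Sum>y\<in>{0..<int p}. T \<eta> \<zeta> y) = (\<Sum>y\<in>{0..<int p}. T \<eta> (\<zeta> mod int p) y)"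
      unfolding T_def by simp
  qed
  have "(\<Sum>\<xi>\<in>{0..<int p}. psi_coeff p f \<xi> h * ep p (\<xi> * x))
      = (\<Sum>\<xi>\<in>{0..<int p}. \<Sum>\<eta>\<in>{0..<int p}. \<Sum>y\<in>{0..<int p}. T \<eta> (\<xi> + \<eta>) y)"
    unfolding psi_coeff_def sum_distrib_right mult.assoc psi_kernel_mult_ep
    by (simp add: T_def X_def Y_def fourier_pair_def sum_distrib_left sum_divide_distrib mult_ac)
  also have "\<dots> = (\<Sum>\<eta>\<in>{0..<int p}. \<Sum>\<zeta>\<in>{0..<int p}. \<Sum>y\<in>{0..<int p}. T \<eta> \<zeta> y)"
    by (subst sum.swap) (rule sum.cong[OF refl], rule sum_periodic_shift[OF p0 T_periodic])
  also have "\<dots> = (\<Sum>y\<in>{0..<int p}. \<Sum>\<zeta>\<in>{0..<int p}. \<Sum>\<eta>\<in>{0..<int p}. T \<eta> \<zeta> y)"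
    by (subst sum.swap, subst (2) sum.swap, rule sum.cong[OF refl], rule sum.swap)
  also have "\<dots> = (\<Sum>y\<in>{0..<int p}. (\<Sum>\<zeta>\<in>{0..<int p}. fourier p f \<zeta> * ep p (\<zeta> * X y))
                     * cnj (\<Sum>\<eta>\<in>{0..<int p}. fourier p f \<eta> * ep p (\<eta> * Y y))) / of_nat p"
    unfolding T_def by (simp add: cnj_ep sum_product sum_divide_distrib mult_ac)
  also have "\<dots> = psi p f x h"
    unfolding psi_def X_def Y_def using fourier_inversion[OF p0 pf] by simp
  finally show ?thesis ..
qed

definition kernel_gram :: "nat \<Rightarrow> int \<Rightarrow> int \<Rightarrow> int \<Rightarrow> complex" where
  "kernel_gram p \<xi> \<eta> \<eta>' = (\<Sum>h\<in>{0..<int p}. psi_kernel p \<xi> \<eta> h * cnj (psi_kernel p \<xi> \<eta>' h))"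

lemma psi_kernel_eq:
  "psi_kernel p \<xi> \<eta> h
     = ep p (- (\<eta> * h) - \<eta> * h\<^sup>2) * (\<Sum>y\<in>{0..<int p}. ep p (\<xi> * y\<^sup>2 + 2 * (\<eta> * h) * y)) / of_nat p"
  unfolding psi_kernel_def by (simp add: ep_add sum_distrib_left mult_ac)

lemma norm_psi_kernel_le_1: assumes "p > 0" shows "cmod (psi_kernel p \<xi> \<eta> h) \<le> 1"
proof -
  have "cmod (\<Sum>y\<in>{0..<int p}. ep p (\<xi> * y\<^sup>2 + 2 * (\<eta> * h) * y + (- (\<eta> * h) - \<eta> * h\<^sup>2)))
      \<le> (\<Sum>y\<in>{0..<int p}. cmod (ep p (\<xi> * y\<^sup>2 + 2 * (\<eta> * h) * y + (- (\<eta> * h) - \<eta> * h\<^sup>2))))"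
    by (rule norm_sum)
  also have "\<dots> = real p" by simp
  finally show ?thesis using assms unfolding psi_kernel_def by (simp add: norm_divide divide_le_eq)
qed

lemma norm_psi_kernel:
  assumes "prime p" "odd p" "\<not> int p dvd \<xi>"
  shows "cmod (psi_kernel p \<xi> \<eta> h) = sqrt (real p) / real p"
proof -
  have "cmod (\<Sum>y\<in>{0..<int p}. ep p (\<xi> * y\<^sup>2 + 2 * (\<eta> * h) * y)) = sqrt (real p)"
    by (rule norm_quadratic_gauss_sum[OF assms])
  then show ?thesis unfolding psi_kernel_eq by (simp add: norm_mult norm_divide)
qed

lemma norm_kernel_gram_le_1:
  assumes "prime p" "odd p" "\<not> int p dvd \<xi>"
  shows "cmod (kernel_gram p \<xi> \<eta> \<eta>') \<le> 1"
proof -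
  have p0: "p > 0" using assms(1) prime_gt_0_nat by blast
  have "cmod (kernel_gram p \<xi> \<eta> \<eta>')
      \<le> (\<Sum>h\<in>{0..<int p}. cmod (psi_kernel p \<xi> \<eta> h * cnj (psi_kernel p \<xi> \<eta>' h)))"
    unfolding kernel_gram_def by (rule norm_sum)
  also have "\<dots> = (\<Sum>h\<in>{0..<int p}. 1 / real p)"
  proof (intro sum.cong refl)
    fix h
    have "sqrt (real p) * sqrt (real p) = real p" using p0 by simp
    then show "cmod (psi_kernel p \<xi> \<eta> h * cnj (psi_kernel p \<xi> \<eta>' h)) = 1 / real p"
      using p0 by (simp add: norm_mult norm_psi_kernel[OF assms] field_simps)
  qed
  also have "\<dots> = 1" using p0 by simp
  finally show ?thesis .
qed

lemma norm_kernel_gram_0_le_1: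
  assumes "prime p" "odd p" "\<not> int p dvd \<eta>"
  shows "cmod (kernel_gram p 0 \<eta> \<eta>') \<le> 1"
proof -
  have p0: "p > 0" using assms(1) prime_gt_0_nat by blast
  have W0: "psi_kernel p 0 \<eta> h = 0" if "h \<in> {0..<int p}" "h \<noteq> 0" for h
    unfolding psi_kernel_eq using sum_ep_double_mult[OF assms that(1)] that(2) by (simp add: mult.assoc)
  have "kernel_gram p 0 \<eta> \<eta>'
      = (\<Sum>h\<in>{0..<int p}. if h = 0 then psi_kernel p 0 \<eta> h * cnj (psi_kernel p 0 \<eta>' h) else 0)"
    unfolding kernel_gram_def by (intro sum.cong refl) (auto simp: W0)
  also have "\<dots> = psi_kernel p 0 \<eta> 0 * cnj (psi_kernel p 0 \<eta>' 0)" using p0 by simp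
  finally have "cmod (kernel_gram p 0 \<eta> \<eta>') = cmod (psi_kernel p 0 \<eta> 0) * cmod (psi_kernel p 0 \<eta>' 0)"
    by (simp add: norm_mult)
  also have "\<dots> \<le> 1 * 1"
    by (intro mult_mono norm_psi_kernel_le_1 p0) auto
  finally show ?thesis by simp
qed

lemma psi_kernel_complete_square:
  assumes "p > 0" "\<xi> * u = 1 + int p * m"
  shows "psi_kernel p \<xi> \<eta> h
    = ep p (- (\<eta> * h) - \<eta> * h\<^sup>2 - (\<eta> * h)\<^sup>2 * u) * (\<Sum>y\<in>{0..<int p}. ep p (\<xi> * y\<^sup>2)) / of_nat p"
proof -
  have "psi_kernel p \<xi> \<eta> h
      = ep p (- (\<eta> * h) - \<eta> * h\<^sup>2) * (ep p (- ((\<eta> * h)\<^sup>2 * u)) * (\<Sum>y\<in>{0..<int p}. ep p (\<xi> * y\<^sup>2))) / of_nat p"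
    unfolding psi_kernel_eq quadratic_sum_complete_square[OF assms] ..
  moreover have "ep p (- (\<eta> * h) - \<eta> * h\<^sup>2 - (\<eta> * h)\<^sup>2 * u)
      = ep p (- (\<eta> * h) - \<eta> * h\<^sup>2) * ep p (- ((\<eta> * h)\<^sup>2 * u))"
    by (simp add: ep_add[symmetric])
  ultimately show ?thesis by (simp only: mult.assoc)
qed

lemma psi_kernel_mult_cnj:
  assumes "prime p" "odd p" "\<not> int p dvd \<xi>" "\<xi> * u = 1 + int p * m"
  shows "psi_kernel p \<xi> \<eta> h * cnj (psi_kernel p \<xi> \<eta>' h)
    = ep p ((\<eta>' - \<eta> + (\<eta>'\<^sup>2 - \<eta>\<^sup>2) * u) * h\<^sup>2 + (\<eta>' - \<eta>) * h) / of_nat p"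
proof -
  have p0: "p > 0" using assms(1) prime_gt_0_nat by blast
  define G where "G = (\<Sum>y\<in>{0..<int p}. ep p (\<xi> * y\<^sup>2))"
  have "G * cnj G = of_nat p"
    using quadratic_gauss_sum_mult_cnj[OF assms(1-3), of 0] unfolding G_def by simp
  moreover have "(- (\<eta> * h) - \<eta> * h\<^sup>2 - (\<eta> * h)\<^sup>2 * u) + - (- (\<eta>' * h) - \<eta>' * h\<^sup>2 - (\<eta>' * h)\<^sup>2 * u)
      = (\<eta>' - \<eta> + (\<eta>'\<^sup>2 - \<eta>\<^sup>2) * u) * h\<^sup>2 + (\<eta>' - \<eta>) * h"
    by (simp add: power2_eq_square algebra_simps)
  ultimately show ?thesis
    unfolding psi_kernel_complete_square[OF p0 assms(4)] G_def[symmetric] using p0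
    by (simp add: cnj_ep ep_add[symmetric] field_simps)
qed

lemma norm_kernel_gram_off_diagonal:
  assumes "prime p" "odd p" "\<not> int p dvd \<xi>" "\<eta> \<in> {0..<int p}" "\<eta>' \<in> {0..<int p}" "\<eta> \<noteq> \<eta>'"
  shows "cmod (kernel_gram p \<xi> \<eta> \<eta>') \<le> 1 / sqrt (real p)"
proof -
  have p0: "p > 0" using assms(1) prime_gt_0_nat by blast
  obtain u m where um: "\<xi> * u = 1 + int p * m" using mod_inverse_exists[OF assms(1,3)] by blast
  have "\<not> int p dvd (\<eta>' - \<eta>)" using dvd_diff_iff_eq[OF assms(5,4)] assms(6) by auto
  then have "cmod (\<Sum>h\<in>{0..<int p}. ep p ((\<eta>' - \<eta> + (\<eta>'\<^sup>2 - \<eta>\<^sup>2) * u) * h\<^sup>2 + (\<eta>' - \<eta>) * h)) \<le> sqrt (real p)"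
    by (rule norm_quadratic_sum_le[OF assms(1,2)])
  then have "cmod (kernel_gram p \<xi> \<eta> \<eta>') \<le> sqrt (real p) / real p"
    unfolding kernel_gram_def psi_kernel_mult_cnj[OF assms(1-3) um] sum_divide_distrib[symmetric]
    by (simp add: norm_divide divide_right_mono)
  also have "\<dots> = 1 / sqrt (real p)" using p0 by (simp add: field_simps real_div_sqrt)
  finally show ?thesis .
qed

lemma norm_kernel_gram_le:
  assumes "prime p" "odd p" "\<xi> \<in> {0..<int p}" "\<eta> \<in> {0..<int p}" "\<eta>' \<in> {0..<int p}"
    and "\<xi> \<noteq> 0 \<or> \<eta> \<noteq> 0"
  shows "cmod (kernel_gram p \<xi> \<eta> \<eta>')
           \<le> 1 / sqrt (real p) + (if \<xi> = 0 then 1 else 0) + (if \<eta> = \<eta>' then 1 else 0)"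
proof -
  have "0 \<le> 1 / sqrt (real p)" by simp
  moreover have "cmod (kernel_gram p \<xi> \<eta> \<eta>') \<le> 1" if "\<xi> = 0 \<or> \<eta> = \<eta>'"
  proof (cases "\<xi> = 0")
    case True
    then have "\<not> int p dvd \<eta>" using assms(4,6) dvd_diff_iff_eq[of \<eta> p 0] by auto
    with True show ?thesis using norm_kernel_gram_0_le_1[OF assms(1,2)] by simp
  next
    case False
    then have "\<not> int p dvd \<xi>" using assms(3) dvd_diff_iff_eq[of \<xi> p 0] by auto
    then show ?thesis by (rule norm_kernel_gram_le_1[OF assms(1,2)])
  qed
  moreover have "cmod (kernel_gram p \<xi> \<eta> \<eta>') \<le> 1 / sqrt (real p)" if "\<xi> \<noteq> 0" "\<eta> \<noteq> \<eta>'"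
  proof -
    have "\<not> int p dvd \<xi>" using assms(3) that(1) dvd_diff_iff_eq[of \<xi> p 0] by auto
    then show ?thesis using norm_kernel_gram_off_diagonal[OF assms(1,2) _ assms(4,5) that(2)] by blast
  qed
  ultimately show ?thesis by (smt (verit))
qed

lemma sum_norm_sq_lincomb_le:
  fixes a :: "int \<Rightarrow> complex" and W :: "int \<Rightarrow> int \<Rightarrow> complex"
  shows "(\<Sum>h\<in>A. (cmod (\<Sum>\<eta>\<in>B. a \<eta> * W \<eta> h))\<^sup>2)
     \<le> (\<Sum>\<eta>\<in>B. \<Sum>\<eta>'\<in>B. cmod (a \<eta>) * cmod (a \<eta>') * cmod (\<Sum>h\<in>A. W \<eta> h * cnj (W \<eta>' h)))"
proof -
  have "complex_of_real (\<Sum>h\<in>A. (cmod (\<Sum>\<eta>\<in>B. a \<eta> * W \<eta> h))\<^sup>2)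
      = (\<Sum>h\<in>A. \<Sum>\<eta>\<in>B. \<Sum>\<eta>'\<in>B. a \<eta> * cnj (a \<eta>') * (W \<eta> h * cnj (W \<eta>' h)))"
    unfolding of_real_sum_norm_sq by (simp add: sum_product mult_ac)
  also have "\<dots> = (\<Sum>\<eta>\<in>B. \<Sum>h\<in>A. \<Sum>\<eta>'\<in>B. a \<eta> * cnj (a \<eta>') * (W \<eta> h * cnj (W \<eta>' h)))"
    by (rule sum.swap)
  also have "\<dots> = (\<Sum>\<eta>\<in>B. \<Sum>\<eta>'\<in>B. \<Sum>h\<in>A. a \<eta> * cnj (a \<eta>') * (W \<eta> h * cnj (W \<eta>' h)))"
    by (rule sum.cong[OF refl], rule sum.swap)
  also have "\<dots> = (\<Sum>\<eta>\<in>B. \<Sum>\<eta>'\<in>B. a \<eta> * cnj (a \<eta>') * (\<Sum>h\<in>A. W \<eta> h * cnj (W \<eta>' h)))"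
    by (simp add: sum_distrib_left)
  finally have eq: "complex_of_real (\<Sum>h\<in>A. (cmod (\<Sum>\<eta>\<in>B. a \<eta> * W \<eta> h))\<^sup>2) = \<dots>" .
  have "(\<Sum>h\<in>A. (cmod (\<Sum>\<eta>\<in>B. a \<eta> * W \<eta> h))\<^sup>2) = cmod (complex_of_real (\<Sum>h\<in>A. (cmod (\<Sum>\<eta>\<in>B. a \<eta> * W \<eta> h))\<^sup>2))"
  proof -
    have nn: "0 \<le> (\<Sum>h\<in>A. (cmod (\<Sum>\<eta>\<in>B. a \<eta> * W \<eta> h))\<^sup>2)" by (simp add: sum_nonneg)
    show ?thesis by (simp only: norm_of_real abs_of_nonneg[OF nn])
  qed
  also have "\<dots> \<le> (\<Sum>\<eta>\<in>B. cmod (\<Sum>\<eta>'\<in>B. a \<eta> * cnj (a \<eta>') * (\<Sum>h\<in>A. W \<eta> h * cnj (W \<eta>' h))))"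
    unfolding eq by (rule norm_sum)
  also have "\<dots> \<le> (\<Sum>\<eta>\<in>B. \<Sum>\<eta>'\<in>B. cmod (a \<eta> * cnj (a \<eta>') * (\<Sum>h\<in>A. W \<eta> h * cnj (W \<eta>' h))))"
    by (intro sum_mono norm_sum)
  also have "\<dots> = (\<Sum>\<eta>\<in>B. \<Sum>\<eta>'\<in>B. cmod (a \<eta>) * cmod (a \<eta>') * cmod (\<Sum>h\<in>A. W \<eta> h * cnj (W \<eta>' h)))"
    by (simp add: norm_mult)
  finally show ?thesis .
qed

lemma norm_fourier_pair:
  "cmod (fourier_pair p f \<xi> \<eta>) = cmod (fourier p f (\<xi> + \<eta>)) * cmod (fourier p f \<eta>)"
  unfolding fourier_pair_def by (simp add: norm_mult)

lemma sum_norm_sq_fourier_shift: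
  assumes "p > 0"
  shows "(\<Sum>\<eta>\<in>{0..<int p}. (cmod (fourier p f (\<eta> + \<xi>)))\<^sup>2) = (\<Sum>\<eta>\<in>{0..<int p}. (cmod (fourier p f \<eta>))\<^sup>2)"
  by (rule sum_periodic_shift[OF assms p_periodic_norm_sq[OF p_periodic_fourier[OF assms]]])

lemma sum_sum_norm_fourier_pair_mult_le:
  assumes "p > 0"
  shows "(\<Sum>\<eta>\<in>{0..<int p}. \<Sum>\<eta>'\<in>{0..<int p}. cmod (fourier_pair p f \<xi> \<eta>) * cmod (fourier_pair p f \<xi> \<eta>'))
           \<le> (\<Sum>\<eta>\<in>{0..<int p}. (cmod (fourier p f \<eta>))\<^sup>2)\<^sup>2"
proof -
  have "(\<Sum>\<eta>\<in>{0..<int p}. \<Sum>\<eta>'\<in>{0..<int p}. cmod (fourier_pair p f \<xi> \<eta>) * cmod (fourier_pair p f \<xi> \<eta>'))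
      = (\<Sum>\<eta>\<in>{0..<int p}. cmod (fourier p f (\<eta> + \<xi>)) * cmod (fourier p f \<eta>))\<^sup>2"
    unfolding norm_fourier_pair power2_eq_square sum_product by (simp add: add.commute)
  also have "\<dots> \<le> (\<Sum>\<eta>\<in>{0..<int p}. (cmod (fourier p f (\<eta> + \<xi>)))\<^sup>2)
          * (\<Sum>\<eta>\<in>{0..<int p}. (cmod (fourier p f \<eta>))\<^sup>2)"
    by (rule Cauchy_Schwarz_ineq_sum)
  also have "\<dots> = (\<Sum>\<eta>\<in>{0..<int p}. (cmod (fourier p f \<eta>))\<^sup>2)\<^sup>2"
    unfolding sum_norm_sq_fourier_shift[OF assms] by (simp add: power2_eq_square)
  finally show ?thesis .
qed

lemma sum_sum_norm_sq_fourier_pair: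
  assumes "p > 0"
  shows "(\<Sum>\<xi>\<in>{0..<int p}. \<Sum>\<eta>\<in>{0..<int p}. (cmod (fourier_pair p f \<xi> \<eta>))\<^sup>2)
       = (\<Sum>\<eta>\<in>{0..<int p}. (cmod (fourier p f \<eta>))\<^sup>2)\<^sup>2"
proof -
  have "(\<Sum>\<xi>\<in>{0..<int p}. \<Sum>\<eta>\<in>{0..<int p}. (cmod (fourier_pair p f \<xi> \<eta>))\<^sup>2)
      = (\<Sum>\<eta>\<in>{0..<int p}. (\<Sum>\<xi>\<in>{0..<int p}. (cmod (fourier p f (\<xi> + \<eta>)))\<^sup>2) * (cmod (fourier p f \<eta>))\<^sup>2)"
    unfolding norm_fourier_pair power_mult_distrib sum_distrib_right by (rule sum.swap)
  also have "\<dots> = (\<Sum>\<eta>\<in>{0..<int p}. (cmod (fourier p f \<eta>))\<^sup>2)\<^sup>2"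
    unfolding sum_norm_sq_fourier_shift[OF assms] by (simp add: sum_distrib_left power2_eq_square)
  finally show ?thesis .
qed

lemma sum_norm_sq_psi_coeff_le:
  assumes "prime p" "odd p" "p_periodic p f" "(\<Sum>w\<in>{0..<int p}. f w) = 0" "\<xi> \<in> {0..<int p}"
  shows "(\<Sum>h\<in>{0..<int p}. (cmod (psi_coeff p f \<xi> h))\<^sup>2)
    \<le> (\<Sum>\<eta>\<in>{0..<int p}. \<Sum>\<eta>'\<in>{0..<int p}. cmod (fourier_pair p f \<xi> \<eta>) * cmod (fourier_pair p f \<xi> \<eta>')
          * (1 / sqrt (real p) + (if \<xi> = 0 then 1 else 0) + (if \<eta> = \<eta>' then 1 else 0)))"
proof -
  have "(\<Sum>h\<in>{0..<int p}. (cmod (psi_coeff p f \<xi> h))\<^sup>2)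
      \<le> (\<Sum>\<eta>\<in>{0..<int p}. \<Sum>\<eta>'\<in>{0..<int p}.
            cmod (fourier_pair p f \<xi> \<eta>) * cmod (fourier_pair p f \<xi> \<eta>') * cmod (kernel_gram p \<xi> \<eta> \<eta>'))"
    unfolding psi_coeff_def kernel_gram_def by (rule sum_norm_sq_lincomb_le)
  also have "\<dots> \<le> (\<Sum>\<eta>\<in>{0..<int p}. \<Sum>\<eta>'\<in>{0..<int p}.
          cmod (fourier_pair p f \<xi> \<eta>) * cmod (fourier_pair p f \<xi> \<eta>')
          * (1 / sqrt (real p) + (if \<xi> = 0 then 1 else 0) + (if \<eta> = \<eta>' then 1 else 0)))"
  proof (intro sum_mono)
    fix \<eta> \<eta>' assume "\<eta> \<in> {0..<int p}" "\<eta>' \<in> {0..<int p}"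
    show "cmod (fourier_pair p f \<xi> \<eta>) * cmod (fourier_pair p f \<xi> \<eta>') * cmod (kernel_gram p \<xi> \<eta> \<eta>')
        \<le> cmod (fourier_pair p f \<xi> \<eta>) * cmod (fourier_pair p f \<xi> \<eta>')
          * (1 / sqrt (real p) + (if \<xi> = 0 then 1 else 0) + (if \<eta> = \<eta>' then 1 else 0))"
    proof (cases "\<xi> = 0 \<and> \<eta> = 0")
      case True
      then have "fourier_pair p f \<xi> \<eta> = 0"
        unfolding fourier_pair_def by (simp add: fourier_0 assms(4))
      then show ?thesis by simp
    next
      case False
      then show ?thesis
        using norm_kernel_gram_le[OF assms(1,2,5) \<open>\<eta> \<in> _\<close> \<open>\<eta>' \<in> _\<close>] by (intro mult_left_mono) auto
    qed
  qed
  finally show ?thesis .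
qed

lemma sum_fourier_pair_weights_le:
  assumes "p > 0"
  shows "(\<Sum>\<xi>\<in>{0..<int p}. \<Sum>\<eta>\<in>{0..<int p}. \<Sum>\<eta>'\<in>{0..<int p}.
            cmod (fourier_pair p f \<xi> \<eta>) * cmod (fourier_pair p f \<xi> \<eta>')
            * (1 / sqrt (real p) + (if \<xi> = 0 then 1 else 0) + (if \<eta> = \<eta>' then 1 else 0)))
         \<le> 3 * sqrt (real p) * (\<Sum>\<eta>\<in>{0..<int p}. (cmod (fourier p f \<eta>))\<^sup>2)\<^sup>2"
proof -
  define P where "P = {0..<int p}"
  define n where "n \<xi> \<eta> = cmod (fourier_pair p f \<xi> \<eta>)" for \<xi> \<eta>
  define N where "N = (\<Sum>\<eta>\<in>P. (cmod (fourier p f \<eta>))\<^sup>2)"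
  have pair: "(\<Sum>\<eta>\<in>P. \<Sum>\<eta>'\<in>P. n \<xi> \<eta> * n \<xi> \<eta>') \<le> N\<^sup>2" for \<xi>
    unfolding n_def N_def P_def by (rule sum_sum_norm_fourier_pair_mult_le[OF assms])
  have "(\<Sum>\<xi>\<in>P. \<Sum>\<eta>\<in>P. \<Sum>\<eta>'\<in>P. n \<xi> \<eta> * n \<xi> \<eta>' / sqrt (real p)) \<le> (\<Sum>\<xi>\<in>P. N\<^sup>2 / sqrt (real p))"
    unfolding sum_divide_distrib[symmetric] by (intro sum_mono divide_right_mono pair) simp
  also have "\<dots> = real p * N\<^sup>2 / sqrt (real p)"
    unfolding P_def by simp
  also have "\<dots> = sqrt (real p) * N\<^sup>2"
    by (metis real_div_sqrt of_nat_0_le_iff times_divide_eq_left)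
  finally have off_diagonal: "(\<Sum>\<xi>\<in>P. \<Sum>\<eta>\<in>P. \<Sum>\<eta>'\<in>P. n \<xi> \<eta> * n \<xi> \<eta>' / sqrt (real p)) \<le> sqrt (real p) * N\<^sup>2" .
  have "(\<Sum>\<xi>\<in>P. \<Sum>\<eta>\<in>P. \<Sum>\<eta>'\<in>P. if \<xi> = 0 then n \<xi> \<eta> * n \<xi> \<eta>' else 0) = (\<Sum>\<eta>\<in>P. \<Sum>\<eta>'\<in>P. n 0 \<eta> * n 0 \<eta>')"
  proof -
    have "(\<Sum>\<xi>\<in>P. \<Sum>\<eta>\<in>P. \<Sum>\<eta>'\<in>P. if \<xi> = 0 then n \<xi> \<eta> * n \<xi> \<eta>' else 0)
        = (\<Sum>\<xi>\<in>P. if \<xi> = 0 then \<Sum>\<eta>\<in>P. \<Sum>\<eta>'\<in>P. n \<xi> \<eta> * n \<xi> \<eta>' else 0)"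
      by (intro sum.cong refl) auto
    then show ?thesis unfolding P_def using assms by (simp add: sum.delta')
  qed
  then have zero_frequency: "(\<Sum>\<xi>\<in>P. \<Sum>\<eta>\<in>P. \<Sum>\<eta>'\<in>P. if \<xi> = 0 then n \<xi> \<eta> * n \<xi> \<eta>' else 0) \<le> N\<^sup>2"
    using pair by simp
  have "(\<Sum>\<xi>\<in>P. \<Sum>\<eta>\<in>P. \<Sum>\<eta>'\<in>P. if \<eta> = \<eta>' then n \<xi> \<eta> * n \<xi> \<eta>' else 0) = (\<Sum>\<xi>\<in>P. \<Sum>\<eta>\<in>P. (n \<xi> \<eta>)\<^sup>2)"
    unfolding P_def by (simp add: sum.delta power2_eq_square)
  also have "\<dots> = N\<^sup>2"
    unfolding n_def N_def P_def by (rule sum_sum_norm_sq_fourier_pair[OF assms])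
  finally have diagonal: "(\<Sum>\<xi>\<in>P. \<Sum>\<eta>\<in>P. \<Sum>\<eta>'\<in>P. if \<eta> = \<eta>' then n \<xi> \<eta> * n \<xi> \<eta>' else 0) = N\<^sup>2" .
  have "1 \<le> sqrt (real p)" using assms by simp
  then have "2 * N\<^sup>2 \<le> 2 * sqrt (real p) * N\<^sup>2"
    by (simp add: mult_le_cancel_right1)
  moreover have "n \<xi> \<eta> * n \<xi> \<eta>' * (1 / sqrt (real p) + (if \<xi> = 0 then 1 else 0) + (if \<eta> = \<eta>' then 1 else 0))
      = n \<xi> \<eta> * n \<xi> \<eta>' / sqrt (real p) + (if \<xi> = 0 then n \<xi> \<eta> * n \<xi> \<eta>' else 0)
        + (if \<eta> = \<eta>' then n \<xi> \<eta> * n \<xi> \<eta>' else 0)" for \<xi> \<eta> \<eta>'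
    by (simp add: distrib_left)
  ultimately show ?thesis
    using off_diagonal zero_frequency diagonal unfolding n_def[symmetric] N_def[symmetric] P_def[symmetric]
    by (simp only: sum.distrib)
qed

lemma sum_norm_sq_psi_le:
  assumes "prime p" "odd p" "p_periodic p f" "(\<Sum>w\<in>{0..<int p}. f w) = 0"
  shows "(\<Sum>x\<in>{0..<int p}. \<Sum>h\<in>{0..<int p}. (cmod (psi p f x h))\<^sup>2)
       \<le> 3 * real p * sqrt (real p) * (\<Sum>\<eta>\<in>{0..<int p}. (cmod (fourier p f \<eta>))\<^sup>2)\<^sup>2"
proof -
  have p0: "p > 0" using assms(1) prime_gt_0_nat by blast
  have "(\<Sum>x\<in>{0..<int p}. \<Sum>h\<in>{0..<int p}. (cmod (psi p f x h))\<^sup>2)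
      = (\<Sum>h\<in>{0..<int p}. \<Sum>x\<in>{0..<int p}. (cmod (\<Sum>\<xi>\<in>{0..<int p}. psi_coeff p f \<xi> h * ep p (\<xi> * x)))\<^sup>2)"
    unfolding psi_fourier_expansion[OF p0 assms(3)] by (rule sum.swap)
  also have "\<dots> = real p * (\<Sum>\<xi>\<in>{0..<int p}. \<Sum>h\<in>{0..<int p}. (cmod (psi_coeff p f \<xi> h))\<^sup>2)"
    unfolding parseval_trig_poly[OF p0] sum_distrib_left[symmetric] by (subst sum.swap) simp
  also have "\<dots> \<le> real p * (\<Sum>\<xi>\<in>{0..<int p}. \<Sum>\<eta>\<in>{0..<int p}. \<Sum>\<eta>'\<in>{0..<int p}.
            cmod (fourier_pair p f \<xi> \<eta>) * cmod (fourier_pair p f \<xi> \<eta>')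
            * (1 / sqrt (real p) + (if \<xi> = 0 then 1 else 0) + (if \<eta> = \<eta>' then 1 else 0)))"
    by (intro mult_left_mono sum_mono sum_norm_sq_psi_coeff_le assms) auto
  also have "\<dots> \<le> real p * (3 * sqrt (real p) * (\<Sum>\<eta>\<in>{0..<int p}. (cmod (fourier p f \<eta>))\<^sup>2)\<^sup>2)"
    by (intro mult_left_mono sum_fourier_pair_weights_le p0) simp
  finally show ?thesis by (simp only: mult.assoc)
qed

lemma Cauchy_Schwarz_complex_sum:
  fixes a b :: "'i \<Rightarrow> complex"
  shows "(cmod (\<Sum>i\<in>I. a i * b i))\<^sup>2 \<le> (\<Sum>i\<in>I. (cmod (a i))\<^sup>2) * (\<Sum>i\<in>I. (cmod (b i))\<^sup>2)"
proof -
  have "cmod (\<Sum>i\<in>I. a i * b i) \<le> (\<Sum>i\<in>I. cmod (a i) * cmod (b i))"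
    by (metis (no_types, lifting) norm_mult norm_sum sum.cong)
  then have "(cmod (\<Sum>i\<in>I. a i * b i))\<^sup>2 \<le> (\<Sum>i\<in>I. cmod (a i) * cmod (b i))\<^sup>2"
    by (intro power_mono) auto
  also have "\<dots> \<le> (\<Sum>i\<in>I. (cmod (a i))\<^sup>2) * (\<Sum>i\<in>I. (cmod (b i))\<^sup>2)"
    by (rule Cauchy_Schwarz_ineq_sum)
  finally show ?thesis .
qed

lemma Cauchy_Schwarz_complex_double_sum:
  fixes a b :: "'i \<Rightarrow> 'j \<Rightarrow> complex"
  shows "(cmod (\<Sum>i\<in>I. \<Sum>j\<in>J. a i j * b i j))\<^sup>2
           \<le> (\<Sum>i\<in>I. \<Sum>j\<in>J. (cmod (a i j))\<^sup>2) * (\<Sum>i\<in>I. \<Sum>j\<in>J. (cmod (b i j))\<^sup>2)"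
proof -
  have e: "(\<Sum>i\<in>I. \<Sum>j\<in>J. g i j) = (\<Sum>z\<in>I \<times> J. g (fst z) (snd z))" for g :: "'i \<Rightarrow> 'j \<Rightarrow> 'c::comm_monoid_add"
    by (simp add: sum.cartesian_product case_prod_beta)
  show ?thesis unfolding e by (rule Cauchy_Schwarz_complex_sum)
qed

definition corr :: "nat \<Rightarrow> (int \<Rightarrow> complex) \<Rightarrow> (int \<Rightarrow> complex) \<Rightarrow> int \<Rightarrow> complex" where
  "corr p g1 g2 x = (\<Sum>y\<in>{0..<int p}. g1 (x + y) * g2 (x + y\<^sup>2)) / of_nat p"

lemma p_periodic_corr:
  assumes "p_periodic p g1" "p_periodic p g2"
  shows "p_periodic p (corr p g1 g2)"
  unfolding corr_def
  by (intro p_periodic_divide p_periodic_sum p_periodic_mult p_periodic_compose[OF assms(1)]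
      p_periodic_compose[OF assms(2)]; intro mod_polynomial_cong)

definition corr_adjoint :: "nat \<Rightarrow> (int \<Rightarrow> complex) \<Rightarrow> (int \<Rightarrow> complex) \<Rightarrow> int \<Rightarrow> complex" where
  "corr_adjoint p F g u = (\<Sum>y\<in>{0..<int p}. cnj (F (u - y)) * g (u - y + y\<^sup>2)) / of_nat p"

lemma corr_adjoint_identity:
  assumes p0: "p > 0" and "p_periodic p F" "p_periodic p g1" "p_periodic p g"
  shows "(\<Sum>x\<in>{0..<int p}. cnj (F x) * corr p g1 g x) = (\<Sum>u\<in>{0..<int p}. g1 u * corr_adjoint p F g u)"
proof -
  have "(\<Sum>x\<in>{0..<int p}. cnj (F x) * corr p g1 g x)
      = (\<Sum>y\<in>{0..<int p}. \<Sum>x\<in>{0..<int p}. cnj (F x) * g1 (x + y) * g (x + y\<^sup>2) / of_nat p)"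
    unfolding corr_def by (subst sum.swap) (simp add: sum_distrib_left sum_divide_distrib mult.assoc)
  also have "\<dots> = (\<Sum>y\<in>{0..<int p}. \<Sum>u\<in>{0..<int p}. cnj (F (u - y)) * g1 u * g (u - y + y\<^sup>2) / of_nat p)"
  proof (rule sum.cong[OF refl])
    fix y
    have "p_periodic p (\<lambda>x. cnj (F x) * g1 (x + y) * g (x + y\<^sup>2) / of_nat p)"
      by (intro p_periodic_divide p_periodic_mult p_periodic_cnj assms(2) p_periodic_compose[OF assms(3)]
          p_periodic_compose[OF assms(4)]; intro mod_polynomial_cong)
    from sum_periodic_shift[OF p0 this, where a = "- y"]
    show "(\<Sum>x\<in>{0..<int p}. cnj (F x) * g1 (x + y) * g (x + y\<^sup>2) / of_nat p)
        = (\<Sum>u\<in>{0..<int p}. cnj (F (u - y)) * g1 u * g (u - y + y\<^sup>2) / of_nat p)"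
      by (simp add: algebra_simps)
  qed
  also have "\<dots> = (\<Sum>u\<in>{0..<int p}. g1 u * corr_adjoint p F g u)"
    unfolding corr_adjoint_def by (subst sum.swap) (simp add: sum_distrib_left sum_divide_distrib mult_ac)
  finally show ?thesis .
qed

lemma of_real_sum_norm_sq_corr_adjoint:
  assumes p0: "p > 0" and pF: "p_periodic p F" and pg: "p_periodic p g"
  shows "complex_of_real (\<Sum>u\<in>{0..<int p}. (cmod (corr_adjoint p F g u))\<^sup>2)
       = (\<Sum>x\<in>{0..<int p}. \<Sum>h\<in>{0..<int p}. cnj (F x) * F (x + h) * psi p g x h) / of_nat p"
proof -
  define P where "P = {0..<int p}"
  define T where "T u y y' = cnj (F (u - y)) * g (u - y + y\<^sup>2) * (F (u - y') * cnj (g (u - y' + y'\<^sup>2)))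
    / (of_nat p * of_nat p)" for u y y'
  have "complex_of_real (\<Sum>u\<in>P. (cmod (corr_adjoint p F g u))\<^sup>2)
      = (\<Sum>u\<in>P. corr_adjoint p F g u * cnj (corr_adjoint p F g u))"
    unfolding of_real_sum_norm_sq ..
  also have "\<dots> = (\<Sum>u\<in>P. \<Sum>y'\<in>P. \<Sum>y\<in>P. T u y y')"
    unfolding corr_adjoint_def T_def P_def by (simp add: sum_product sum_divide_distrib mult_ac)
  also have "\<dots> = (\<Sum>u\<in>P. \<Sum>y\<in>P. \<Sum>y'\<in>P. T u y y')"
    by (rule sum.cong[OF refl], rule sum.swap)
  also have "\<dots> = (\<Sum>y\<in>P. \<Sum>u\<in>P. \<Sum>y'\<in>P. T u y y')"
    by (rule sum.swap)
  also have "\<dots> = (\<Sum>y\<in>P. \<Sum>x\<in>P. \<Sum>h\<in>P. T (x + y) y (y - h))"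
  proof (rule sum.cong[OF refl])
    fix y
    have "p_periodic p (\<lambda>u. \<Sum>y'\<in>P. T u y y')"
      unfolding T_def by (intro p_periodic_sum p_periodic_divide p_periodic_mult p_periodic_cnj
          p_periodic_compose[OF pF] p_periodic_compose[OF pg]; intro mod_polynomial_cong)
    from sum_periodic_shift[OF p0 this, of y]
    have "(\<Sum>u\<in>P. \<Sum>y'\<in>P. T u y y') = (\<Sum>x\<in>P. \<Sum>y'\<in>P. T (x + y) y y')"
      unfolding P_def by simp
    also have "\<dots> = (\<Sum>x\<in>P. \<Sum>h\<in>P. T (x + y) y (y - h))"
    proof (rule sum.cong[OF refl])
      fix x
      have "p_periodic p (\<lambda>y'. T (x + y) y y')"
        unfolding T_def by (intro p_periodic_divide p_periodic_mult p_periodic_cnj p_periodic_compose[OF pF]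
            p_periodic_compose[OF pg] p_periodic_const; intro mod_polynomial_cong)
      from sum_periodic_reflect[OF p0 this, of y]
      show "(\<Sum>y'\<in>P. T (x + y) y y') = (\<Sum>h\<in>P. T (x + y) y (y - h))"
        unfolding P_def by simp
    qed
    finally show "(\<Sum>u\<in>P. \<Sum>y'\<in>P. T u y y') = (\<Sum>x\<in>P. \<Sum>h\<in>P. T (x + y) y (y - h))" .
  qed
  also have "\<dots> = (\<Sum>x\<in>P. \<Sum>h\<in>P. \<Sum>y\<in>P. cnj (F x) * F (x + h)
      * (g (x + y\<^sup>2) * cnj (g (x + h + (y - h)\<^sup>2))) / (of_nat p * of_nat p))"
    unfolding T_def by (subst sum.swap, rule sum.cong[OF refl], subst sum.swap) (simp add: algebra_simps)
  also have "\<dots> = (\<Sum>x\<in>P. \<Sum>h\<in>P. cnj (F x) * F (x + h) * psi p g x h) / of_nat p"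
    unfolding psi_def P_def by (simp add: sum_distrib_left sum_divide_distrib mult_ac)
  finally show ?thesis unfolding P_def .
qed

lemma sum_norm_sq_corr_adjoint_sq_le:
  assumes p0: "p > 0" and pF: "p_periodic p F" and pg: "p_periodic p g"
  shows "(\<Sum>u\<in>{0..<int p}. (cmod (corr_adjoint p F g u))\<^sup>2)\<^sup>2
       \<le> (\<Sum>x\<in>{0..<int p}. (cmod (F x))\<^sup>2)\<^sup>2 * (\<Sum>x\<in>{0..<int p}. \<Sum>h\<in>{0..<int p}. (cmod (psi p g x h))\<^sup>2)
           / (real p)\<^sup>2"
proof -
  define P where "P = {0..<int p}"
  define Q where "Q = (\<Sum>u\<in>P. (cmod (corr_adjoint p F g u))\<^sup>2)"
  have "Q \<ge> 0" unfolding Q_def by (simp add: sum_nonneg)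
  then have "Q = cmod (complex_of_real Q)" by simp
  also have "\<dots> = cmod (\<Sum>x\<in>P. \<Sum>h\<in>P. cnj (F x) * F (x + h) * psi p g x h) / real p"
    unfolding Q_def P_def of_real_sum_norm_sq_corr_adjoint[OF assms] by (simp add: norm_divide)
  finally have "Q\<^sup>2 = (cmod (\<Sum>x\<in>P. \<Sum>h\<in>P. cnj (F x) * F (x + h) * psi p g x h))\<^sup>2 / (real p)\<^sup>2"
    by (simp add: power_divide)
  also have "\<dots> \<le> (\<Sum>x\<in>P. \<Sum>h\<in>P. (cmod (cnj (F x) * F (x + h)))\<^sup>2)
      * (\<Sum>x\<in>P. \<Sum>h\<in>P. (cmod (psi p g x h))\<^sup>2) / (real p)\<^sup>2"
    unfolding P_def by (intro divide_right_mono Cauchy_Schwarz_complex_double_sum) auto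
  also have "(\<Sum>x\<in>P. \<Sum>h\<in>P. (cmod (cnj (F x) * F (x + h)))\<^sup>2) = (\<Sum>x\<in>P. (cmod (F x))\<^sup>2)\<^sup>2"
  proof -
    have shift: "(\<Sum>h\<in>P. (cmod (F (x + h)))\<^sup>2) = (\<Sum>x\<in>P. (cmod (F x))\<^sup>2)" for x
      using sum_periodic_shift[OF p0 p_periodic_norm_sq[OF pF], of x]
      unfolding P_def by (simp add: add.commute)
    have "(\<Sum>x\<in>P. \<Sum>h\<in>P. (cmod (cnj (F x) * F (x + h)))\<^sup>2)
        = (\<Sum>x\<in>P. (cmod (F x))\<^sup>2 * (\<Sum>h\<in>P. (cmod (F (x + h)))\<^sup>2))"
      by (simp add: norm_mult power_mult_distrib sum_distrib_left)
    then show ?thesis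
      unfolding shift by (simp add: sum_distrib_right power2_eq_square)
  qed
  finally show ?thesis unfolding Q_def P_def .
qed

lemma sum_norm_sq_corr_sq_le:
  assumes p0: "p > 0" and pg1: "p_periodic p g1" and pg: "p_periodic p g"
  shows "(\<Sum>x\<in>{0..<int p}. (cmod (corr p g1 g x))\<^sup>2)\<^sup>2
       \<le> (\<Sum>u\<in>{0..<int p}. (cmod (g1 u))\<^sup>2)\<^sup>2 * (\<Sum>x\<in>{0..<int p}. \<Sum>h\<in>{0..<int p}. (cmod (psi p g x h))\<^sup>2)
           / (real p)\<^sup>2"
    (is "?A\<^sup>2 \<le> ?N\<^sup>2 * ?B / _")
proof -
  define F where "F = corr p g1 g"
  have pF: "p_periodic p F" unfolding F_def by (rule p_periodic_corr[OF pg1 pg])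
  define Q where "Q = (\<Sum>u\<in>{0..<int p}. (cmod (corr_adjoint p F g u))\<^sup>2)"
  have "complex_of_real ?A = (\<Sum>x\<in>{0..<int p}. cnj (F x) * corr p g1 g x)"
    unfolding of_real_sum_norm_sq F_def by (simp add: mult.commute)
  also have "\<dots> = (\<Sum>u\<in>{0..<int p}. g1 u * corr_adjoint p F g u)"
    by (rule corr_adjoint_identity[OF p0 pF pg1 pg])
  finally have A_eq: "complex_of_real ?A = (\<Sum>u\<in>{0..<int p}. g1 u * corr_adjoint p F g u)" .
  have "?A \<ge> 0" by (simp add: sum_nonneg)
  then have "cmod (\<Sum>u\<in>{0..<int p}. g1 u * corr_adjoint p F g u) = ?A"
    unfolding A_eq[symmetric] norm_of_real by simp
  then have "?A\<^sup>2 = (cmod (\<Sum>u\<in>{0..<int p}. g1 u * corr_adjoint p F g u))\<^sup>2"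
    by simp
  also have "\<dots> \<le> ?N * Q"
    unfolding Q_def by (rule Cauchy_Schwarz_complex_sum)
  finally have "(?A\<^sup>2)\<^sup>2 \<le> ?N\<^sup>2 * Q\<^sup>2"
    by (metis power_mono power_mult_distrib zero_le_power2)
  also have "\<dots> \<le> ?N\<^sup>2 * (?A\<^sup>2 * ?B / (real p)\<^sup>2)"
    using sum_norm_sq_corr_adjoint_sq_le[OF p0 pF pg] unfolding Q_def F_def by (intro mult_left_mono) auto
  finally have le: "?A\<^sup>2 * ?A\<^sup>2 \<le> ?A\<^sup>2 * (?N\<^sup>2 * ?B / (real p)\<^sup>2)"
    by (simp add: power2_eq_square mult_ac)
  show ?thesis
  proof (cases "?A = 0")
    case True
    have "0 \<le> ?N\<^sup>2 * ?B / (real p)\<^sup>2" by (simp add: sum_nonneg)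
    with True show ?thesis by simp
  next
    case False
    then have "?A\<^sup>2 > 0" by (simp add: sum_nonneg)
    with le show ?thesis using mult_le_cancel_left_pos by blast
  qed
qed

lemma corr_center:
  assumes p0: "p > 0" and pg1: "p_periodic p g1"
  shows "corr p g1 (\<lambda>w. g2 w - m) x = corr p g1 g2 x - m * ((\<Sum>u\<in>{0..<int p}. g1 u) / of_nat p)"
proof -
  have sh: "(\<Sum>y\<in>{0..<int p}. g1 (x + y)) = (\<Sum>u\<in>{0..<int p}. g1 u)"
    using sum_periodic_shift[OF p0 pg1, where a = x] by (simp add: add.commute)
  have "corr p g1 (\<lambda>w. g2 w - m) x
      = (\<Sum>y\<in>{0..<int p}. g1 (x + y) * g2 (x + y\<^sup>2) - m * g1 (x + y)) / of_nat p"
    unfolding corr_def by (simp add: algebra_simps)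
  also have "\<dots> = corr p g1 g2 x - m * (\<Sum>y\<in>{0..<int p}. g1 (x + y)) / of_nat p"
    unfolding corr_def by (simp add: sum_subtractf sum_distrib_left diff_divide_distrib)
  finally show ?thesis unfolding sh by simp
qed

lemma sum_minus_mean:
  fixes g :: "int \<Rightarrow> complex"
  assumes p0: "p > 0"
  shows "(\<Sum>w\<in>{0..<int p}. g w - (\<Sum>u\<in>{0..<int p}. g u) / of_nat p) = 0"
proof -
  have "(\<Sum>w\<in>{0..<int p}. g w - (\<Sum>u\<in>{0..<int p}. g u) / of_nat p)
      = (\<Sum>w\<in>{0..<int p}. g w) - of_nat p * ((\<Sum>u\<in>{0..<int p}. g u) / of_nat p)"
    by (simp add: sum_subtractf sum_constant)
  also have "\<dots> = 0" using p0 by simp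
  finally show ?thesis .
qed

lemma sum_norm_sq_minus_mean_le:
  fixes g :: "int \<Rightarrow> complex"
  assumes p0: "p > 0"
  shows "(\<Sum>w\<in>{0..<int p}. (cmod (g w - (\<Sum>u\<in>{0..<int p}. g u) / of_nat p))\<^sup>2)
           \<le> (\<Sum>w\<in>{0..<int p}. (cmod (g w))\<^sup>2)"
proof -
  define P where "P = {0..<int p}"
  define m where "m = (\<Sum>u\<in>P. g u) / of_nat p"
  have Sg: "(\<Sum>u\<in>P. g u) = of_nat p * m" unfolding m_def using p0 by simp
  have cP: "card P = p" unfolding P_def by simp
  have "complex_of_real (\<Sum>w\<in>P. (cmod (g w - m))\<^sup>2) = (\<Sum>w\<in>P. (g w - m) * cnj (g w - m))"
    by (rule of_real_sum_norm_sq)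
  also have "\<dots> = (\<Sum>w\<in>P. g w * cnj (g w)) - cnj m * (\<Sum>w\<in>P. g w)
        - m * cnj (\<Sum>w\<in>P. g w) + of_nat p * (m * cnj m)"
    by (simp add: algebra_simps sum_subtractf sum.distrib sum_distrib_left cP)
  also have "\<dots> = (\<Sum>w\<in>P. g w * cnj (g w)) - of_nat p * (m * cnj m)"
    unfolding Sg by (simp add: algebra_simps)
  also have "\<dots> = complex_of_real ((\<Sum>w\<in>P. (cmod (g w))\<^sup>2) - real p * (cmod m)\<^sup>2)"
    unfolding of_real_diff of_real_mult of_real_sum_norm_sq complex_norm_square by simp
  finally have "(\<Sum>w\<in>P. (cmod (g w - m))\<^sup>2) = (\<Sum>w\<in>P. (cmod (g w))\<^sup>2) - real p * (cmod m)\<^sup>2"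
    using of_real_eq_iff by blast
  moreover have "0 \<le> real p * (cmod m)\<^sup>2" by simp
  ultimately show ?thesis unfolding P_def m_def by linarith
qed

lemma sum_norm_sq_corr_2:
  assumes p2: "p = 2" and pg1: "p_periodic p g1" and pg: "p_periodic p g"
  shows "(\<Sum>x\<in>{0..<int p}. (cmod (corr p g1 g x))\<^sup>2)
           \<le> (\<Sum>u\<in>{0..<int p}. (cmod (g1 u))\<^sup>2) * (\<Sum>u\<in>{0..<int p}. (cmod (g u))\<^sup>2) / real p"
proof -
  have p0: "p > 0" using p2 by simp
  define N1 where "N1 = (\<Sum>u\<in>{0..<int p}. (cmod (g1 u))\<^sup>2)"
  define N where "N = (\<Sum>u\<in>{0..<int p}. (cmod (g u))\<^sup>2)"
  have pt: "(cmod (corr p g1 g x))\<^sup>2 \<le> N1 * N / (real p)\<^sup>2" for x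
  proof -
    have "(cmod (corr p g1 g x))\<^sup>2 = (cmod (\<Sum>y\<in>{0..<int p}. g1 (x + y) * g (x + y\<^sup>2)))\<^sup>2 / (real p)\<^sup>2"
      unfolding corr_def by (simp add: norm_divide power_divide)
    also have "\<dots> \<le> (\<Sum>y\<in>{0..<int p}. (cmod (g1 (x + y)))\<^sup>2)
          * (\<Sum>y\<in>{0..<int p}. (cmod (g (x + y\<^sup>2)))\<^sup>2) / (real p)\<^sup>2"
      by (intro divide_right_mono Cauchy_Schwarz_complex_sum) auto
    also have "(\<Sum>y\<in>{0..<int p}. (cmod (g1 (x + y)))\<^sup>2) = N1"
      unfolding N1_def
      using sum_periodic_shift[OF p0 p_periodic_norm_sq[OF pg1], where a = x] by (simp add: add.commute)
    also have "(\<Sum>y\<in>{0..<int p}. (cmod (g (x + y\<^sup>2)))\<^sup>2) = (\<Sum>y\<in>{0..<int p}. (cmod (g (x + y)))\<^sup>2)"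
    proof (rule sum.cong[OF refl])
      fix y assume "y \<in> {0..<int p}"
      then have "y = 0 \<or> y = 1" using p2 by auto
      then have "y\<^sup>2 = y" by auto
      then show "(cmod (g (x + y\<^sup>2)))\<^sup>2 = (cmod (g (x + y)))\<^sup>2" by simp
    qed
    also have "\<dots> = N"
      unfolding N_def
      using sum_periodic_shift[OF p0 p_periodic_norm_sq[OF pg], where a = x] by (simp add: add.commute)
    finally show ?thesis .
  qed
  have "(\<Sum>x\<in>{0..<int p}. (cmod (corr p g1 g x))\<^sup>2) \<le> (\<Sum>x\<in>{0..<int p}. N1 * N / (real p)\<^sup>2)"
    by (rule sum_mono) (rule pt)
  also have "\<dots> = real p * (N1 * N / (real p)\<^sup>2)" by simp
  also have "\<dots> = N1 * N / real p" using p0 by (simp add: power2_eq_square)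
  finally show ?thesis unfolding N1_def N_def .
qed

lemma sum_norm_sq_corr_bound:
  assumes "prime p" and pg1: "p_periodic p g1" and pg: "p_periodic p g"
    and mean_zero: "(\<Sum>w\<in>{0..<int p}. g w) = 0"
  shows "((\<Sum>x\<in>{0..<int p}. (cmod (corr p g1 g x))\<^sup>2) / real p)\<^sup>2
    \<le> 3 * ((\<Sum>u\<in>{0..<int p}. (cmod (g1 u))\<^sup>2) / real p * ((\<Sum>u\<in>{0..<int p}. (cmod (g u))\<^sup>2) / real p))\<^sup>2
        / sqrt (real p)"
    (is "(?A / _)\<^sup>2 \<le> 3 * ?n\<^sup>2 / _")
proof (cases "p = 2")
  case True
  have x_le: "x \<le> 3 * x / sqrt 2" if "x \<ge> 0" for x :: real
  proof -
    have "x * sqrt 2 \<le> x * 3"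
      using that sqrt2_less_2 by (intro mult_left_mono) auto
    then show ?thesis by (simp add: le_divide_eq)
  qed
  have "?A / real p \<le> ?n"
    using sum_norm_sq_corr_2[OF True pg1 pg] True by (simp add: divide_right_mono)
  then have "(?A / real p)\<^sup>2 \<le> ?n\<^sup>2"
    by (simp add: power_mono sum_nonneg)
  also have "\<dots> \<le> 3 * ?n\<^sup>2 / sqrt 2"
    by (rule x_le) simp
  finally show ?thesis using True by simp
next
  case False
  have p0: "p > 0" using assms(1) prime_gt_0_nat by blast
  have "odd p" using assms(1) False prime_odd_nat prime_ge_2_nat by (metis le_neq_implies_less)
  define B where "B = (\<Sum>x\<in>{0..<int p}. \<Sum>h\<in>{0..<int p}. (cmod (psi p g x h))\<^sup>2)"
  define N1 where "N1 = (\<Sum>u\<in>{0..<int p}. (cmod (g1 u))\<^sup>2)"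
  define N where "N = (\<Sum>u\<in>{0..<int p}. (cmod (g u))\<^sup>2)"
  have "?A\<^sup>2 \<le> N1\<^sup>2 * B / (real p)\<^sup>2"
    unfolding B_def N1_def by (rule sum_norm_sq_corr_sq_le[OF p0 pg1 pg])
  also have "\<dots> \<le> N1\<^sup>2 * (3 * real p * sqrt (real p) * (N / real p)\<^sup>2) / (real p)\<^sup>2"
    unfolding B_def N_def parseval[OF p0 pg, symmetric]
    by (intro divide_right_mono mult_left_mono sum_norm_sq_psi_le[OF assms(1) \<open>odd p\<close> pg mean_zero]) auto
  finally have A_le: "?A\<^sup>2 \<le> N1\<^sup>2 * (3 * real p * sqrt (real p) * (N / real p)\<^sup>2) / (real p)\<^sup>2" .
  define s where "s = sqrt (real p)"
  have s: "s > 0" "real p = s * s"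
    using p0 unfolding s_def by simp_all
  have "(?A / real p)\<^sup>2 = ?A\<^sup>2 / (real p)\<^sup>2"
    by (simp add: power_divide)
  also have "\<dots> \<le> N1\<^sup>2 * (3 * real p * sqrt (real p) * (N / real p)\<^sup>2) / (real p)\<^sup>2 / (real p)\<^sup>2"
    by (rule divide_right_mono[OF A_le]) simp
  also have "\<dots> = 3 * (N1 / real p * (N / real p))\<^sup>2 / sqrt (real p)"
    unfolding s_def[symmetric] s(2) using s(1) by (simp add: field_simps power2_eq_square)
  finally show ?thesis unfolding N1_def N_def .
qed

lemma sqrt_le_of_sq_le_div_sqrt:
  fixes a n r :: real
  assumes "a \<ge> 0" "n \<ge> 0" "r \<ge> 1" "a\<^sup>2 \<le> 3 * n\<^sup>2 / sqrt r"
  shows "sqrt a \<le> 2 * r powr (-1/10) * sqrt n"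
proof -
  have "1 / sqrt r = r powr (-1/2)"
    using assms(3) by (simp add: powr_minus_divide powr_half_sqrt)
  also have "\<dots> \<le> r powr (-2/5)"
    using assms(3) by (intro powr_mono) auto
  also have "\<dots> = r powr (-1/5) * r powr (-1/5)"
    by (simp add: powr_add[symmetric])
  finally have root_le: "1 / sqrt r \<le> r powr (-1/5) * r powr (-1/5)" .
  have "a\<^sup>2 \<le> 3 * n\<^sup>2 * (1 / sqrt r)"
    using assms(4) by simp
  also have "\<dots> \<le> 16 * n\<^sup>2 * (r powr (-1/5) * r powr (-1/5))"
    using root_le assms(3) by (intro mult_mono) auto
  also have "\<dots> = (4 * r powr (-1/5) * n)\<^sup>2"
    by (simp add: power2_eq_square)
  finally have "a \<le> 4 * r powr (-1/5) * n"
    by (rule power2_le_imp_le) (use assms(2) in simp)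
  then have "sqrt a \<le> sqrt (4 * r powr (-1/5) * n)"
    by (rule real_sqrt_le_mono)
  also have "\<dots> = 2 * sqrt (r powr (-1/5)) * sqrt n"
    by (simp only: real_sqrt_mult real_sqrt_four)
  also have "\<dots> = 2 * r powr (-1/10) * sqrt n"
    using assms(3) by (simp add: powr_half_sqrt[symmetric] powr_powr)
  finally show ?thesis .
qed

lemma corr_deviation_bound:
  assumes "prime p" and pg1: "p_periodic p g1" and pg2: "p_periodic p g2"
  shows "sqrt ((\<Sum>x\<in>{0..<int p}. (cmod (corr p g1 g2 x
              - (\<Sum>u\<in>{0..<int p}. g1 u) / of_nat p * ((\<Sum>u\<in>{0..<int p}. g2 u) / of_nat p)))\<^sup>2) / real p)
     \<le> 2 * real p powr (-1/10) * sqrt ((\<Sum>u\<in>{0..<int p}. (cmod (g1 u))\<^sup>2) / real p)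
         * sqrt ((\<Sum>u\<in>{0..<int p}. (cmod (g2 u))\<^sup>2) / real p)"
proof -
  have p0: "p > 0" using assms(1) prime_gt_0_nat by blast
  define m2 where "m2 = (\<Sum>u\<in>{0..<int p}. g2 u) / of_nat p"
  define g where "g w = g2 w - m2" for w
  define n1 where "n1 = (\<Sum>u\<in>{0..<int p}. (cmod (g1 u))\<^sup>2) / real p"
  define n2 where "n2 = (\<Sum>u\<in>{0..<int p}. (cmod (g2 u))\<^sup>2) / real p"
  have pg: "p_periodic p g" using pg2 unfolding p_periodic_def g_def by metis
  have "(\<Sum>u\<in>{0..<int p}. (cmod (g u))\<^sup>2) \<le> (\<Sum>u\<in>{0..<int p}. (cmod (g2 u))\<^sup>2)"
    unfolding g_def m2_def by (rule sum_norm_sq_minus_mean_le[OF p0])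
  then have ng_le: "(\<Sum>u\<in>{0..<int p}. (cmod (g u))\<^sup>2) / real p \<le> n2"
    unfolding n2_def by (simp add: divide_right_mono)
  have "(\<Sum>w\<in>{0..<int p}. g w) = 0"
    unfolding g_def m2_def by (rule sum_minus_mean[OF p0])
  then have "((\<Sum>x\<in>{0..<int p}. (cmod (corr p g1 g x))\<^sup>2) / real p)\<^sup>2
      \<le> 3 * (n1 * ((\<Sum>u\<in>{0..<int p}. (cmod (g u))\<^sup>2) / real p))\<^sup>2 / sqrt (real p)"
    unfolding n1_def by (rule sum_norm_sq_corr_bound[OF assms(1) pg1 pg])
  also have "\<dots> \<le> 3 * (n1 * n2)\<^sup>2 / sqrt (real p)"
    using ng_le by (intro divide_right_mono mult_left_mono power_mono) (auto simp: n1_def sum_nonneg)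
  finally have "sqrt ((\<Sum>x\<in>{0..<int p}. (cmod (corr p g1 g x))\<^sup>2) / real p)
      \<le> 2 * real p powr (-1/10) * sqrt (n1 * n2)"
    by (rule sqrt_le_of_sq_le_div_sqrt[rotated 3]) (use p0 in \<open>auto simp: n1_def n2_def sum_nonneg\<close>)
  moreover have "corr p g1 g2 x - (\<Sum>u\<in>{0..<int p}. g1 u) / of_nat p * m2 = corr p g1 g x" for x
    unfolding g_def corr_center[OF p0 pg1] by (simp add: mult.commute)
  ultimately show ?thesis
    unfolding m2_def[symmetric] n1_def[symmetric] n2_def[symmetric]
    by (simp add: real_sqrt_mult mult.assoc)
qed

lemma sum_nat_int:
  "(\<Sum>n<p. h n) = (\<Sum>x\<in>{0..<int p}. h (nat x))"
proof -
  have "{0..<int p} = int ` {0..<p}" by (simp add: image_int_atLeastLessThan)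
  then have "(\<Sum>x\<in>{0..<int p}. h (nat x)) = (\<Sum>n\<in>{0..<p}. h (nat (int n)))"
    by (simp add: sum.reindex)
  also have "\<dots> = (\<Sum>n<p. h n)" by (simp add: lessThan_atLeast0)
  finally show ?thesis ..
qed

definition periodic_ext :: "nat \<Rightarrow> (nat \<Rightarrow> complex) \<Rightarrow> int \<Rightarrow> complex" where
  "periodic_ext p f k = f (nat (k mod int p))"

lemma p_periodic_periodic_ext: "p_periodic p (periodic_ext p f)"
  unfolding p_periodic_def periodic_ext_def by simp

lemma periodic_ext_nat: assumes "x \<in> {0..<int p}" shows "periodic_ext p f x = f (nat x)"
  using assms unfolding periodic_ext_def by simp

lemma expect_periodic_ext: "expect p f = (\<Sum>x\<in>{0..<int p}. periodic_ext p f x) / of_nat p"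
  unfolding expect_def sum_nat_int by (simp add: periodic_ext_nat)

lemma norm2_periodic_ext: "norm2 p f = sqrt ((\<Sum>x\<in>{0..<int p}. (cmod (periodic_ext p f x))\<^sup>2) / real p)"
  unfolding norm2_def sum_nat_int by (simp add: periodic_ext_nat)

lemma corrF_periodic_ext: "corrF p f1 f2 n = corr p (periodic_ext p f1) (periodic_ext p f2) (int n)"
proof -
  have "corrF p f1 f2 n = (\<Sum>y\<in>{0..<int p}. f1 ((n + nat y) mod p) * f2 ((n + (nat y)\<^sup>2) mod p)) / of_nat p"
    unfolding corrF_def sum_nat_int ..
  also have "\<dots> = corr p (periodic_ext p f1) (periodic_ext p f2) (int n)"
    unfolding corr_def
  proof (intro arg_cong[where f = "\<lambda>t. t / of_nat p"] sum.cong refl)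
    fix y assume y: "y \<in> {0..<int p}"
    obtain m where m: "y = int m" using y by (metis atLeastLessThan_iff nonneg_int_cases)
    have e1: "nat ((int n + y) mod int p) = (n + nat y) mod p"
      unfolding m by (metis nat_int of_nat_add zmod_int)
    have e2: "nat ((int n + y\<^sup>2) mod int p) = (n + (nat y)\<^sup>2) mod p"
      unfolding m by (metis nat_int of_nat_add of_nat_power zmod_int)
    show "f1 ((n + nat y) mod p) * f2 ((n + (nat y)\<^sup>2) mod p)
        = periodic_ext p f1 (int n + y) * periodic_ext p f2 (int n + y\<^sup>2)"
      unfolding periodic_ext_def e1 e2 ..
  qed
  finally show ?thesis .
qed

lemma norm2_corrF_deviation:
  "norm2 p (\<lambda>x. corrF p f1 f2 x - expect p f1 * expect p f2)
   = sqrt ((\<Sum>x\<in>{0..<int p}. (cmod (corr p (periodic_ext p f1) (periodic_ext p f2) x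
        - (\<Sum>u\<in>{0..<int p}. periodic_ext p f1 u) / of_nat p
          * ((\<Sum>u\<in>{0..<int p}. periodic_ext p f2 u) / of_nat p)))\<^sup>2) / real p)"
  unfolding norm2_def sum_nat_int expect_periodic_ext corrF_periodic_ext
  by (intro arg_cong[where f = "\<lambda>t. sqrt (t / real p)"] sum.cong refl) simp

theorem theorem1p1:
  "\<exists>c::real. c > 0 \<and>
     (\<forall>(p::nat) (f1::nat \<Rightarrow> complex) (f2::nat \<Rightarrow> complex). prime p \<longrightarrow>
        norm2 p (\<lambda>x. corrF p f1 f2 x - expect p f1 * expect p f2)
          \<le> c * real p powr (-1/10) * norm2 p f1 * norm2 p f2)"
proof (intro exI[of _ 2] conjI allI impI)
  fix p :: nat and f1 f2 :: "nat \<Rightarrow> complex"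
  assume "prime p"
  show "norm2 p (\<lambda>x. corrF p f1 f2 x - expect p f1 * expect p f2)
          \<le> 2 * real p powr (-1/10) * norm2 p f1 * norm2 p f2"
    unfolding norm2_corrF_deviation norm2_periodic_ext[of p f1] norm2_periodic_ext[of p f2]
    by (rule corr_deviation_bound[OF \<open>prime p\<close> p_periodic_periodic_ext p_periodic_periodic_ext])
qed simp

end
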